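(* Let $\mathcal G$ be a connected rank-3 tensor Feynman graph with the data described in the context. Then \[ F_{\rm int}(\mathcal G)=-\big(\omega(\mathcal G_{\rm col})-g_{\partial\mathcal G}\big)+3V_++2V_m-N_{\rm ext}-(C_\partial-1)+2 . \]
   Context: Bubbles. Use colors $1,2,3$ for bubble edges and color $0$ for propagator lines. The tetrahedral bubble $\mathbf b_+$ is $K_4$ on $w_1,\dots,w_4$ with the following colored edges: \begin{itemize} \item $w_1w_2$ and $w_3w_4$ of color 1; \item $w_1w_3$ and $w_2w_4$ of color 2; \item $w_1w_4$ and $w_2w_3$ of color 3. \end{itemize} For $c\in\{1,2,3\}$, the melonic bubble $\mathbf b_c$ has vertices $w_1,\dots,w_4$ and the following edges: \begin{itemize} \item $w_1w_2$ doubled, carrying the two colors of $\{1,2,3\}\setminus\{c\}$; \item $w_3w_4$ doubled, carrying the two colors of $\{1,2,3\}\setminus\{c\}$; \item single edges $w_2w_3$ and $w_4w_1$ of color $c$. \end{itemize} Graphs. A graph $\mathcal G$ consists of the following data: \begin{itemize} \item $V=V_++V_m$ interaction vertices, each a copy of $\mathbf b_+$ ($V_+$ of them) or of some $\mathbf b_c$ ($V_m$ of them); \item $L$ internal lines of color 0, each joining two of the $4V$ bubble vertices, with each bubble vertex incident to at most one line; \item a color-0 external leg attached to each bubble vertex not incident to a line. \end{itemize} Let $N_{\rm ext}$ be the number of external legs, so $4V=2L+N_{\rm ext}$. The colored extension $\mathcal G_{\rm col}$ is the resulting 4-edge-colored graph, with $4V$ vertices, $L+6V$ edges and $N_{\rm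 ext}$ half-edges. Connected means $\mathcal G_{\rm col}$ is connected. Faces. For $c\in\{1,2,3\}$, a face of color $c$ is a connected component of the subgraph of $\mathcal G_{\rm col}$ formed by the color-0 edges and half-edges and the color-$c$ edges. It is internal if it is a cycle, and external if it is a path joining two external legs. $F_{\rm int}(\mathcal G)$ is the total number of internal faces. Boundary graph. The boundary graph $\partial\mathcal G$ is defined as follows: \begin{itemize} \item its vertices are the external legs; \item each external face of color $c$ gives an edge of color $c$ joining its two end legs. \end{itemize} $C_\partial$ is its number of connected components. $F_\partial$ is its number of bicolored cycles (cycles using exactly the edges of two colors $\{a,b\}\subset\{1,2,3\}$). Its genus $g_{\partial\mathcal G}$ is defined by \[ 2C_\partial-2g_{\partial\mathcal G}=N_{\rm ext}-\tfrac32N_{\rm ext}+F_\partial . \] Pinched jackets. The three jackets correspond to the three cyclic orders $(0,a,b,c)$ of the colors $0,1,2,3$ up to reversal; equivalently, to the choice of the unordered pair $\{a,c\}\subset\{1,2,3\}$ of colors adjacent to $0$. For such a jacket $J$, let $F_{\tilde J}$ be the sum of: \begin{itemize} \item the number of cycles of $\mathcal G_{\rm col}$ bicolored in one of the pairs $\{0,a\},\{a,b\},\{b,c\},\{c,0\}$; \item the number of bicolored cycles of $\partial\mathcal G$ with colors $\{a,c\}$. \end{itemize} The genus of the pinched jacket $\tilde J$ is defined by \[ 2-2g_{\tilde J}=4V-(L+6V)+F_{\tilde J}. \] Finally, $\omega(\mathcal G_{\rm col})=\sum_{J}g_{\tilde J}$ is the sum over the three pinched jackets. *)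

theory Defs
  imports Complex_Main
begin

text \<open>Bubble types: the tetrahedral bubble, or the melonic bubble b_c (c a colour in {1,2,3}).
  Bubble vertices w1..w4 are indexed 0..3. Colours 1,2,3 are bubble colours; colour 0 is the
  propagator colour.\<close>

datatype bubble = Tet | Mel nat

definition valid_bubble :: "bubble \<Rightarrow> bool" where
  "valid_bubble b = (case b of Tet \<Rightarrow> True | Mel c \<Rightarrow> c \<in> {1,2,3})"

definition bubble_edges :: "bubble \<Rightarrow> nat \<Rightarrow> nat set set" where
  "bubble_edges b c = (case b of
      Tet \<Rightarrow> (if c = 1 then {{0,1},{2,3}} else if c = 2 then {{0,2},{1,3}}
              else if c = 3 then {{0,3},{1,2}} else {})
    | Mel m \<Rightarrow> (if c \<notin> {1,2,3} then {}
              else if c = m then {{1,2},{3,0}} else {{0,1},{2,3}}))"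

text \<open>Bubble vertices of a graph with V bubbles: pairs (bubble index, local vertex).\<close>
definition bvert :: "nat \<Rightarrow> (nat \<times> nat) set" where
  "bvert V = {0..<V} \<times> {0..<4}"

definition col_edges :: "nat \<Rightarrow> (nat \<Rightarrow> bubble) \<Rightarrow> nat \<Rightarrow> (nat \<times> nat) set set" where
  "col_edges V bt c = {{(i,k),(i,l)} | i k l. i < V \<and> {k,l} \<in> bubble_edges (bt i) c}"

definition adj :: "'v set set \<Rightarrow> ('v \<times> 'v) set" where
  "adj E = {(x,y). {x,y} \<in> E}"

definition comps :: "'v set \<Rightarrow> 'v set set \<Rightarrow> 'v set set" where
  "comps X E = (\<lambda>x. {y \<in> X. (x,y) \<in> (adj E)\<^sup>*}) ` X"

text \<open>In a graph where every vertex meets at most one edge of colour a and at most one of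
  colour b (E_a, E_b), a connected component of the {a,b}-subgraph is a cycle iff every
  vertex of it meets an edge of colour a and an edge of colour b.\<close>
definition bicol_cycles :: "'v set \<Rightarrow> 'v set set \<Rightarrow> 'v set set \<Rightarrow> 'v set set" where
  "bicol_cycles X Ea Eb = {C \<in> comps X (Ea \<union> Eb).
      \<forall>x\<in>C. (\<exists>e\<in>Ea. x \<in> e) \<and> (\<exists>e\<in>Eb. x \<in> e)}"

definition valid_lines :: "nat \<Rightarrow> (nat \<times> nat) set set \<Rightarrow> bool" where
  "valid_lines V E0 = ((\<forall>e\<in>E0. \<exists>x y. e = {x,y} \<and> x \<noteq> y \<and> x \<in> bvert V \<and> y \<in> bvert V)
     \<and> (\<forall>e\<in>E0. \<forall>e'\<in>E0. e \<noteq> e' \<longrightarrow> e \<inter> e' = {}))"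

text \<open>Vertices carrying an external leg (legs are identified with their bubble vertex).\<close>
definition legs :: "nat \<Rightarrow> (nat \<times> nat) set set \<Rightarrow> (nat \<times> nat) set" where
  "legs V E0 = bvert V - \<Union>E0"

definition faces :: "nat \<Rightarrow> (nat \<Rightarrow> bubble) \<Rightarrow> (nat \<times> nat) set set \<Rightarrow> nat \<Rightarrow> (nat \<times> nat) set set" where
  "faces V bt E0 c = comps (bvert V) (E0 \<union> col_edges V bt c)"

definition int_faces :: "nat \<Rightarrow> (nat \<Rightarrow> bubble) \<Rightarrow> (nat \<times> nat) set set \<Rightarrow> nat \<Rightarrow> (nat \<times> nat) set set" where
  "int_faces V bt E0 c = bicol_cycles (bvert V) E0 (col_edges V bt c)"

definition F_int :: "nat \<Rightarrow> (nat \<Rightarrow> bubble) \<Rightarrow> (nat \<times> nat) set set \<Rightarrow> nat" where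
  "F_int V bt E0 = card (int_faces V bt E0 1) + card (int_faces V bt E0 2) + card (int_faces V bt E0 3)"

text \<open>Boundary graph edges of colour c: each external face (a face that is not a cycle, i.e. a
  path joining two legs) gives the edge joining its two end legs.\<close>
definition bdry_edges :: "nat \<Rightarrow> (nat \<Rightarrow> bubble) \<Rightarrow> (nat \<times> nat) set set \<Rightarrow> nat \<Rightarrow> (nat \<times> nat) set set" where
  "bdry_edges V bt E0 c = (\<lambda>C. C \<inter> legs V E0) ` (faces V bt E0 c - int_faces V bt E0 c)"

definition C_bdry :: "nat \<Rightarrow> (nat \<Rightarrow> bubble) \<Rightarrow> (nat \<times> nat) set set \<Rightarrow> nat" where
  "C_bdry V bt E0 = card (comps (legs V E0)
      (bdry_edges V bt E0 1 \<union> bdry_edges V bt E0 2 \<union> bdry_edges V bt E0 3))"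

definition bdry_cycles :: "nat \<Rightarrow> (nat \<Rightarrow> bubble) \<Rightarrow> (nat \<times> nat) set set \<Rightarrow> nat \<Rightarrow> nat \<Rightarrow> nat" where
  "bdry_cycles V bt E0 a b = card (bicol_cycles (legs V E0) (bdry_edges V bt E0 a) (bdry_edges V bt E0 b))"

definition F_bdry :: "nat \<Rightarrow> (nat \<Rightarrow> bubble) \<Rightarrow> (nat \<times> nat) set set \<Rightarrow> nat" where
  "F_bdry V bt E0 = bdry_cycles V bt E0 1 2 + bdry_cycles V bt E0 1 3 + bdry_cycles V bt E0 2 3"

definition N_ext :: "nat \<Rightarrow> (nat \<times> nat) set set \<Rightarrow> nat" where
  "N_ext V E0 = card (legs V E0)"

definition g_bdry :: "nat \<Rightarrow> (nat \<Rightarrow> bubble) \<Rightarrow> (nat \<times> nat) set set \<Rightarrow> real" where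
  "g_bdry V bt E0 = (2 * real (C_bdry V bt E0) - (real (N_ext V E0) - 3/2 * real (N_ext V E0)
                      + real (F_bdry V bt E0))) / 2"

definition colE :: "nat \<Rightarrow> (nat \<Rightarrow> bubble) \<Rightarrow> (nat \<times> nat) set set \<Rightarrow> nat \<Rightarrow> (nat \<times> nat) set set" where
  "colE V bt E0 c = (if c = 0 then E0 else col_edges V bt c)"

definition gcol_cycles :: "nat \<Rightarrow> (nat \<Rightarrow> bubble) \<Rightarrow> (nat \<times> nat) set set \<Rightarrow> nat \<Rightarrow> nat \<Rightarrow> nat" where
  "gcol_cycles V bt E0 a b = card (bicol_cycles (bvert V) (colE V bt E0 a) (colE V bt E0 b))"

text \<open>Pinched jacket with cyclic order (0,a,b,c): determined by the middle colour b,
  where {a,c} = {1,2,3} - {b} are the colours adjacent to 0.\<close>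
definition F_pjacket :: "nat \<Rightarrow> (nat \<Rightarrow> bubble) \<Rightarrow> (nat \<times> nat) set set \<Rightarrow> nat \<Rightarrow> nat \<Rightarrow> nat \<Rightarrow> nat" where
  "F_pjacket V bt E0 a b c = gcol_cycles V bt E0 0 a + gcol_cycles V bt E0 a b
      + gcol_cycles V bt E0 b c + gcol_cycles V bt E0 c 0 + bdry_cycles V bt E0 a c"

definition g_pjacket :: "nat \<Rightarrow> (nat \<Rightarrow> bubble) \<Rightarrow> (nat \<times> nat) set set \<Rightarrow> nat \<Rightarrow> nat \<Rightarrow> nat \<Rightarrow> real" where
  "g_pjacket V bt E0 a b c = (2 - (4 * real V - (real (card E0) + 6 * real V)
      + real (F_pjacket V bt E0 a b c))) / 2"

definition omega :: "nat \<Rightarrow> (nat \<Rightarrow> bubble) \<Rightarrow> (nat \<times> nat) set set \<Rightarrow> real" where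
  "omega V bt E0 = g_pjacket V bt E0 1 2 3 + g_pjacket V bt E0 1 3 2 + g_pjacket V bt E0 2 1 3"

definition V_tet :: "nat \<Rightarrow> (nat \<Rightarrow> bubble) \<Rightarrow> nat" where
  "V_tet V bt = card {i. i < V \<and> bt i = Tet}"

definition V_mel :: "nat \<Rightarrow> (nat \<Rightarrow> bubble) \<Rightarrow> nat" where
  "V_mel V bt = card {i. i < V \<and> bt i \<noteq> Tet}"

definition gcol_connected :: "nat \<Rightarrow> (nat \<Rightarrow> bubble) \<Rightarrow> (nat \<times> nat) set set \<Rightarrow> bool" where
  "gcol_connected V bt E0 = (card (comps (bvert V)
      (E0 \<union> col_edges V bt 1 \<union> col_edges V bt 2 \<union> col_edges V bt 3)) = 1)"

end

theory Submission imports Defs begin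

(* The identity is pure bookkeeping once the cycles of G_col bicoloured in two bubble colours
   are counted: such cycles never leave a bubble, and a bubble contributes one {a,c}-cycle if
   its {a,c}-subgraph is connected and two otherwise.  Over the six bubble colour pairs of the
   three pinched jackets this gives 6 per tetrahedral and 8 per melonic bubble.  The cycles
   bicoloured in {0,c} are exactly the internal faces of colour c, each counted twice over the
   jackets, and the boundary cycles cancel against the definition of the boundary genus; what
   is left closes up with 4V = 2L + N_ext. *)

lemma converse_adj: "(adj E)\<inverse> = adj E"
  by (auto simp: adj_def insert_commute)

lemma rtrancl_adj_commute: "(x, y) \<in> (adj E)\<^sup>* \<Longrightarrow> (y, x) \<in> (adj E)\<^sup>*"
  using rtrancl_converseI[of x y "adj E"] by (simp add: converse_adj)

lemma card_comps_eq_card_image: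
  assumes "\<And>x y. x \<in> X \<Longrightarrow> y \<in> X \<Longrightarrow> (x, y) \<in> (adj E)\<^sup>* \<longleftrightarrow> f x = f y"
  shows "card (comps X E) = card (f ` X)"
proof -
  have "comps X E = (\<lambda>v. {y \<in> X. f y = v}) ` (f ` X)"
    unfolding comps_def image_image using assms by (intro image_cong) auto
  moreover have "inj_on (\<lambda>v. {y \<in> X. f y = v}) (f ` X)"
    by (rule inj_onI) blast
  ultimately show ?thesis by (simp add: card_image)
qed

lemma bicol_cycles_eq_comps:
  assumes "\<And>x. x \<in> X \<Longrightarrow> (\<exists>e\<in>Ea. x \<in> e) \<and> (\<exists>e\<in>Eb. x \<in> e)"
  shows "bicol_cycles X Ea Eb = comps X (Ea \<union> Eb)"
  using assms unfolding bicol_cycles_def comps_def by auto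

lemma bicol_cycles_commute: "bicol_cycles X Ea Eb = bicol_cycles X Eb Ea"
  unfolding bicol_cycles_def by (auto simp: Un_commute)

lemma card_Diff_Union_pairs:
  assumes "finite X"
    and "\<forall>e\<in>M. \<exists>x y. e = {x, y} \<and> x \<noteq> y \<and> x \<in> X \<and> y \<in> X"
    and "\<forall>e\<in>M. \<forall>e'\<in>M. e \<noteq> e' \<longrightarrow> e \<inter> e' = {}"
  shows "card X = 2 * card M + card (X - \<Union>M)"
proof -
  have pair: "e \<subseteq> X \<and> finite e \<and> card e = 2" if e: "e \<in> M" for e
  proof -
    obtain x y where "e = {x, y}" "x \<noteq> y" "x \<in> X" "y \<in> X" using bspec[OF assms(2) e] by blast
    then show ?thesis by simp
  qed
  then have sub: "\<Union>M \<subseteq> X" by blast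
  have "pairwise disjnt M" using assms(3) unfolding pairwise_def disjnt_def by blast
  then have "card (\<Union>M) = sum card M"
    using pair by (intro card_Union_disjoint) auto
  also have "\<dots> = 2 * card M" using pair by simp
  finally have "card (\<Union>M) = 2 * card M" .
  moreover have "card (X - \<Union>M) = card X - card (\<Union>M)"
    using card_Diff_subset[OF finite_subset[OF sub assms(1)] sub] .
  moreover have "card (\<Union>M) \<le> card X" using card_mono[OF assms(1) sub] .
  ultimately show ?thesis by linarith
qed

definition connected_in_colours :: "bubble \<Rightarrow> nat \<Rightarrow> nat \<Rightarrow> bool" where
  "connected_in_colours b a c = (case b of Tet \<Rightarrow> True | Mel m \<Rightarrow> m = a \<or> m = c)"

(* The least vertex of the component of k in the {a,c}-subgraph; when this subgraph is
   disconnected it consists of the doubled edges {0,1} and {2,3}. *)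
definition face_rep :: "bubble \<Rightarrow> nat \<Rightarrow> nat \<Rightarrow> nat \<Rightarrow> nat" where
  "face_rep b a c k = (if connected_in_colours b a c then 0 else 2 * (k div 2))"

lemma valid_bubble_cases: "valid_bubble b \<Longrightarrow> b = Tet \<or> b = Mel 1 \<or> b = Mel 2 \<or> b = Mel 3"
  by (cases b) (auto simp: valid_bubble_def)

lemma face_rep_edge:
  assumes "valid_bubble b" "a \<in> {1,2,3}" "c \<in> {1,2,3}" "a \<noteq> c" "d \<in> {a, c}"
    and "{k, l} \<in> bubble_edges b d"
  shows "face_rep b a c k = face_rep b a c l"
  using valid_bubble_cases[OF assms(1)] assms(2-6)
  by (auto simp: face_rep_def connected_in_colours_def bubble_edges_def doubleton_eq_iff
      split: if_splits)

lemma face_rep_within_two_steps: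
  assumes "valid_bubble b" "a \<in> {1,2,3}" "c \<in> {1,2,3}" "a \<noteq> c" "k < 4"
  shows "\<exists>m. (k, m) \<in> (adj (bubble_edges b a \<union> bubble_edges b c))\<^sup>=
           \<and> (m, face_rep b a c k) \<in> (adj (bubble_edges b a \<union> bubble_edges b c))\<^sup>="
proof -
  have "k = 0 \<or> k = 1 \<or> k = 2 \<or> k = 3" using assms(5) by auto
  moreover have "a = 1 \<and> c = 2 \<or> a = 1 \<and> c = 3 \<or> a = 2 \<and> c = 1 \<or> a = 2 \<and> c = 3
      \<or> a = 3 \<and> c = 1 \<or> a = 3 \<and> c = 2"
    using assms(2-4) by auto
  ultimately show ?thesis
    using valid_bubble_cases[OF assms(1)]
    by (elim disjE conjE; simp add: adj_def face_rep_def connected_in_colours_def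
        bubble_edges_def doubleton_eq_iff; blast)
qed

lemma bubble_edges_cover:
  assumes "valid_bubble b" "d \<in> {1,2,3}" "k < 4"
  shows "\<exists>l. {k, l} \<in> bubble_edges b d"
proof -
  have "k = 0 \<or> k = 1 \<or> k = 2 \<or> k = 3" using assms(3) by auto
  then show ?thesis
    using valid_bubble_cases[OF assms(1)] assms(2) by (auto simp: bubble_edges_def insert_commute)
qed

lemma card_face_reps:
  "card (face_rep b a c ` {0..<4}) = (if connected_in_colours b a c then 1 else 2)"
proof -
  have "{0..<4::nat} = {0,1,2,3}" by auto
  then show ?thesis by (simp add: face_rep_def)
qed

lemma adj_col_edges:
  "(x, y) \<in> adj (col_edges V bt d) \<longleftrightarrow>
    (\<exists>i k l. x = (i, k) \<and> y = (i, l) \<and> i < V \<and> {k, l} \<in> bubble_edges (bt i) d)"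
  unfolding adj_def col_edges_def
  by (auto simp: doubleton_eq_iff insert_commute)

definition face_label :: "(nat \<Rightarrow> bubble) \<Rightarrow> nat \<Rightarrow> nat \<Rightarrow> nat \<times> nat \<Rightarrow> nat \<times> nat" where
  "face_label bt a c x = (fst x, face_rep (bt (fst x)) a c (snd x))"

context
  fixes V :: nat and bt :: "nat \<Rightarrow> bubble" and a c :: nat
  assumes valid: "\<forall>i<V. valid_bubble (bt i)"
    and colours: "a \<in> {1,2,3}" "c \<in> {1,2,3}" "a \<noteq> c"
begin

private abbreviation "E \<equiv> col_edges V bt a \<union> col_edges V bt c"

private lemma adj_E:
  "(x, y) \<in> adj E \<longleftrightarrow> (\<exists>i k l. x = (i, k) \<and> y = (i, l) \<and> i < V
     \<and> (k, l) \<in> adj (bubble_edges (bt i) a \<union> bubble_edges (bt i) c))"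
  using adj_col_edges[of x y V bt a] adj_col_edges[of x y V bt c]
  by (auto simp: adj_def)

lemma face_label_invariant:
  assumes "(x, y) \<in> (adj E)\<^sup>*"
  shows "face_label bt a c y = face_label bt a c x"
  using assms
proof (induction rule: rtrancl_induct)
  case (step y z)
  then obtain i k l where yz: "y = (i, k)" "z = (i, l)" "i < V"
      and "(k, l) \<in> adj (bubble_edges (bt i) a \<union> bubble_edges (bt i) c)"
    unfolding adj_E by blast
  then obtain d where "d \<in> {a, c}" "{k, l} \<in> bubble_edges (bt i) d"
    by (auto simp: adj_def)
  then have "face_rep (bt i) a c k = face_rep (bt i) a c l"
    using face_rep_edge valid colours yz(3) by blast
  then show ?case
    using step.IH yz by (auto simp: face_label_def)
qed simp

lemma reaches_face_label:
  assumes "x \<in> bvert V"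
  shows "(x, face_label bt a c x) \<in> (adj E)\<^sup>*"
proof -
  obtain i k where x: "x = (i, k)" "i < V" "k < 4" using assms by (auto simp: bvert_def)
  then obtain m where
    "(k, m) \<in> (adj (bubble_edges (bt i) a \<union> bubble_edges (bt i) c))\<^sup>="
    "(m, face_rep (bt i) a c k) \<in> (adj (bubble_edges (bt i) a \<union> bubble_edges (bt i) c))\<^sup>="
    using face_rep_within_two_steps valid colours by blast
  then have "((i, k), (i, m)) \<in> (adj E)\<^sup>=" "((i, m), (i, face_rep (bt i) a c k)) \<in> (adj E)\<^sup>="
    using x(2) by (auto simp: adj_E)
  then show ?thesis
    using x(1) by (auto simp: face_label_def intro: rtrancl_trans)
qed

lemma card_comps_col_edges:
  "card (comps (bvert V) E) = (\<Sum>i<V. if connected_in_colours (bt i) a c then 1 else 2)"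
proof -
  have "card (comps (bvert V) E) = card (face_label bt a c ` bvert V)"
  proof (rule card_comps_eq_card_image)
    fix x y assume xy: "x \<in> bvert V" "y \<in> bvert V"
    show "(x, y) \<in> (adj E)\<^sup>* \<longleftrightarrow> face_label bt a c x = face_label bt a c y"
    proof
      assume "(x, y) \<in> (adj E)\<^sup>*"
      then show "face_label bt a c x = face_label bt a c y"
        by (simp add: face_label_invariant)
    next
      assume "face_label bt a c x = face_label bt a c y"
      then have "(face_label bt a c x, y) \<in> (adj E)\<^sup>*"
        using reaches_face_label[OF xy(2)] by (simp add: rtrancl_adj_commute)
      then show "(x, y) \<in> (adj E)\<^sup>*"
        using reaches_face_label[OF xy(1)] by (rule rtrancl_trans[rotated])
    qed
  qed
  also have "face_label bt a c ` bvert V = (SIGMA i:{..<V}. face_rep (bt i) a c ` {0..<4})"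
    unfolding bvert_def face_label_def by force
  finally show ?thesis by (simp add: card_face_reps)
qed

lemma gcol_cycles_bubble_colours:
  "gcol_cycles V bt E0 a c = (\<Sum>i<V. if connected_in_colours (bt i) a c then 1 else 2)"
proof -
  have "\<exists>e\<in>col_edges V bt d. x \<in> e" if x: "x \<in> bvert V" and d: "d \<in> {a, c}" for x d
  proof -
    obtain i k where x: "x = (i, k)" "i < V" "k < 4" using x by (auto simp: bvert_def)
    then obtain l where "{k, l} \<in> bubble_edges (bt i) d"
      using bubble_edges_cover valid colours d by blast
    then show ?thesis using x unfolding col_edges_def by blast
  qed
  then have "bicol_cycles (bvert V) (col_edges V bt a) (col_edges V bt c) = comps (bvert V) E"
    by (intro bicol_cycles_eq_comps) auto
  moreover have "colE V bt E0 a = col_edges V bt a" "colE V bt E0 c = col_edges V bt c"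
    using colours by (auto simp: colE_def)
  ultimately show ?thesis
    by (simp add: gcol_cycles_def card_comps_col_edges)
qed

end

(* The pairs {a,b} and {b,c} of the jackets (0,1,2,3), (0,1,3,2) and (0,2,1,3). *)
lemma jacket_bubble_cycles:
  assumes "\<forall>i<V. valid_bubble (bt i)"
  shows "gcol_cycles V bt E0 1 2 + gcol_cycles V bt E0 2 3 + gcol_cycles V bt E0 1 3
      + gcol_cycles V bt E0 3 2 + gcol_cycles V bt E0 2 1 + gcol_cycles V bt E0 1 3
    = (\<Sum>i<V. if bt i = Tet then 6 else 8)"
proof -
  have "(if connected_in_colours b 1 2 then 1 else 2) + (if connected_in_colours b 2 3 then 1 else 2)
      + (if connected_in_colours b 1 3 then 1 else 2) + (if connected_in_colours b 3 2 then 1 else 2)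
      + (if connected_in_colours b 2 1 then 1 else 2) + (if connected_in_colours b 1 3 then 1 else 2)
    = (if b = Tet then 6 else (8::nat))" if "valid_bubble b" for b
    using valid_bubble_cases[OF that] by (auto simp: connected_in_colours_def)
  then show ?thesis
    using assms by (simp add: gcol_cycles_bubble_colours sum.distrib[symmetric])
qed

lemma sum_by_bubble_type:
  "(\<Sum>i<V. if bt i = Tet then x else y) = x * V_tet V bt + y * (V_mel V bt :: nat)"
proof -
  have "{..<V} \<inter> {i. bt i = Tet} = {i. i < V \<and> bt i = Tet}"
    "{..<V} \<inter> - {i. bt i = Tet} = {i. i < V \<and> bt i \<noteq> Tet}" by auto
  then show ?thesis
    by (simp add: sum.If_cases V_tet_def V_mel_def mult.commute)
qed

lemma gcol_cycles_with_lines: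
  assumes "c \<noteq> 0"
  shows "gcol_cycles V bt E0 0 c = card (int_faces V bt E0 c)"
    and "gcol_cycles V bt E0 c 0 = card (int_faces V bt E0 c)"
  using assms
  by (simp_all add: gcol_cycles_def colE_def int_faces_def bicol_cycles_commute)

lemma double_omega:
  assumes "\<forall>i<V. valid_bubble (bt i)"
  shows "2 * omega V bt E0 = 6 + 6 * real V + 3 * real (card E0) - 2 * real (F_int V bt E0)
    - (6 * real (V_tet V bt) + 8 * real (V_mel V bt)) - real (F_bdry V bt E0)"
proof -
  have "real (gcol_cycles V bt E0 1 2 + gcol_cycles V bt E0 2 3 + gcol_cycles V bt E0 1 3
      + gcol_cycles V bt E0 3 2 + gcol_cycles V bt E0 2 1 + gcol_cycles V bt E0 1 3)
    = 6 * real (V_tet V bt) + 8 * real (V_mel V bt)"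
    using jacket_bubble_cycles[OF assms] by (simp add: sum_by_bubble_type)
  then show ?thesis
    unfolding omega_def g_pjacket_def F_pjacket_def F_int_def F_bdry_def
    by (simp add: gcol_cycles_with_lines field_simps)
qed

lemma double_g_bdry:
  "2 * g_bdry V bt E0 = 2 * real (C_bdry V bt E0) + real (N_ext V E0) / 2 - real (F_bdry V bt E0)"
  unfolding g_bdry_def by (simp add: field_simps)

lemma bubble_vertex_count:
  assumes "valid_lines V E0"
  shows "4 * V = 2 * card E0 + N_ext V E0"
  using card_Diff_Union_pairs[of "bvert V" E0] assms
  by (simp add: valid_lines_def N_ext_def legs_def bvert_def)

lemma bubble_count: "V = V_tet V bt + V_mel V bt"
  using sum_by_bubble_type[of bt 1 1 V] by simp

theorem proposition1:
  fixes V :: nat and bt :: "nat \<Rightarrow> bubble" and E0 :: "(nat \<times> nat) set set"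
  assumes "\<forall>i<V. valid_bubble (bt i)"
    and "valid_lines V E0"
    and "gcol_connected V bt E0"
  shows "real (F_int V bt E0) =
    - (omega V bt E0 - g_bdry V bt E0) + 3 * real (V_tet V bt) + 2 * real (V_mel V bt)
    - real (N_ext V E0) - (real (C_bdry V bt E0) - 1) + 2"
proof -
  have "4 * real V = 2 * real (card E0) + real (N_ext V E0)"
    using arg_cong[OF bubble_vertex_count[OF assms(2)], of real] by simp
  moreover have "real V = real (V_tet V bt) + real (V_mel V bt)"
    using arg_cong[OF bubble_count, of real] by simp
  ultimately show ?thesis
    using double_omega[OF assms(1), of E0] double_g_bdry[of V bt E0] by argo
qed

end
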